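(* In the algebra $\mathcal{A}$ described in the context, let \[\tilde A^{\mathrm{bi}}_{s;mn}(W)=\{(E_n-s^2Q_n^2)(Q_m^2E_m-1)-(E_m-s^2Q_m^2)(Q_n^2E_n-1)\}Q_mQ_n\] and \[A^{\mathrm{bi};2}_{s;mn}(W)=\{u_1(s,E_n,Q_n)(E_n-s^2Q_n^2)v_1(s,E_m,Q_m)(Q_m^2E_m-1)-u_1(s,E_m,Q_m)(E_m-s^2Q_m^2)v_1(s,E_n,Q_n)(Q_n^2E_n-1)\}Q_mQ_n.\] Then $\tilde A^{\mathrm{bi}}_{s;mn}(W)$ is a right divisor of $A^{\mathrm{bi};2}_{s;mn}(W)$, i.e. $A^{\mathrm{bi};2}_{s;mn}(W)=C\,\tilde A^{\mathrm{bi}}_{s;mn}(W)$ for some $C\in\mathcal{A}$.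
   Context: $s$ is an indeterminate. $\mathcal{A}$ is the algebra of noncommutative polynomials in $E_m,E_n$ with coefficients in $\mathbb{Q}(s,Q_m,Q_n)$ written on the left, subject to $E_mE_n=E_nE_m$, $E_m\,p(s,Q_m,Q_n)=p(s,sQ_m,Q_n)E_m$, $E_n\,p(s,Q_m,Q_n)=p(s,Q_m,sQ_n)E_n$ for rational functions $p$. For $(E,Q)\in\{(E_m,Q_m),(E_n,Q_n)\}$ put $\Phi_k(Q)=1-s^kQ^4$ and $u_1(s,E,Q)=\frac{1}{\Phi_6(Q)}E-\frac{s^2Q^2}{\Phi_2(Q)}$, $v_1(s,E,Q)=\frac{s^2Q^2}{\Phi_6(Q)}E-\frac{1}{\Phi_2(Q)}$. *)

theory Defs
  imports Complex_Main "HOL-Library.Poly_Mapping" "HOL-Computational_Algebra.Fraction_Field"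
begin

text \<open>Multivariate polynomials over the rationals: monomials are exponent vectors
  (variable index to exponent).  Variable 0 is s, variable 1 is Q_m, variable 2 is Q_n.\<close>

type_synonym mpoly = "(nat \<Rightarrow>\<^sub>0 nat) \<Rightarrow>\<^sub>0 rat"

type_synonym rfun = "mpoly fract"

definition mvar :: "nat \<Rightarrow> mpoly" where
  "mvar i = Poly_Mapping.single (Poly_Mapping.single i 1) 1"

definition rvar :: "nat \<Rightarrow> rfun" where
  "rvar i = Fract (mvar i) 1"

abbreviation s_var :: rfun where "s_var \<equiv> rvar 0"
abbreviation Qm_var :: rfun where "Qm_var \<equiv> rvar 1"
abbreviation Qn_var :: rfun where "Qn_var \<equiv> rvar 2"

text \<open>Substitution of variable k by s * (variable k) on polynomials
  (the monomial s^a0 ... x_k^ak ... goes to s^(a0+ak) ... x_k^ak ...).\<close>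
definition mono_shift :: "nat \<Rightarrow> (nat \<Rightarrow>\<^sub>0 nat) \<Rightarrow> (nat \<Rightarrow>\<^sub>0 nat)" where
  "mono_shift k a = a + Poly_Mapping.single 0 (Poly_Mapping.lookup a k)"

definition msub :: "nat \<Rightarrow> mpoly \<Rightarrow> mpoly" where
  "msub k p = (\<Sum>a\<in>Poly_Mapping.keys p. Poly_Mapping.single (mono_shift k a) (Poly_Mapping.lookup p a))"

definition rsub :: "nat \<Rightarrow> rfun \<Rightarrow> rfun" where
  "rsub k x = (THE y. \<forall>p q. q \<noteq> 0 \<longrightarrow> x = Fract p q \<longrightarrow> y = Fract (msub k p) (msub k q))"

abbreviation sigma_m :: "rfun \<Rightarrow> rfun" where "sigma_m \<equiv> rsub 1"
abbreviation sigma_n :: "rfun \<Rightarrow> rfun" where "sigma_n \<equiv> rsub 2"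

text \<open>An element of A is represented by its coefficient function: f i j is the (left)
  coefficient of E_m^i E_n^j.  Genuine elements of A are those with finite support.\<close>

type_synonym alg = "nat \<Rightarrow> nat \<Rightarrow> rfun"

definition alg_fin :: "alg \<Rightarrow> bool" where
  "alg_fin f \<longleftrightarrow> finite {(i, j). f i j \<noteq> 0}"

definition aconst :: "rfun \<Rightarrow> alg" where
  "aconst c = (\<lambda>i j. if i = 0 \<and> j = 0 then c else 0)"

definition aEm :: alg where
  "aEm = (\<lambda>i j. if i = 1 \<and> j = 0 then 1 else 0)"

definition aEn :: alg where
  "aEn = (\<lambda>i j. if i = 0 \<and> j = 1 then 1 else 0)"

definition aadd :: "alg \<Rightarrow> alg \<Rightarrow> alg" (infixl "\<oplus>" 65) where
  "f \<oplus> g = (\<lambda>i j. f i j + g i j)"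

definition adiff :: "alg \<Rightarrow> alg \<Rightarrow> alg" (infixl "\<ominus>" 65) where
  "f \<ominus> g = (\<lambda>i j. f i j - g i j)"

text \<open>(c E_m^a E_n^b)(d E_m^c E_n^d) = c sigma_m^a sigma_n^b(d) E_m^(a+c) E_n^(b+d).\<close>
definition amul :: "alg \<Rightarrow> alg \<Rightarrow> alg" (infixl "\<odot>" 70) where
  "f \<odot> g = (\<lambda>i j. \<Sum>a\<le>i. \<Sum>b\<le>j. f a b * (sigma_m ^^ a) ((sigma_n ^^ b) (g (i - a) (j - b))))"

definition Phi :: "nat \<Rightarrow> rfun \<Rightarrow> rfun" where
  "Phi k Q = 1 - s_var ^ k * Q ^ 4"

definition u1 :: "alg \<Rightarrow> rfun \<Rightarrow> alg" where
  "u1 E Q = aconst (1 / Phi 6 Q) \<odot> E \<ominus> aconst (s_var ^ 2 * Q ^ 2 / Phi 2 Q)"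

definition v1 :: "alg \<Rightarrow> rfun \<Rightarrow> alg" where
  "v1 E Q = aconst (s_var ^ 2 * Q ^ 2 / Phi 6 Q) \<odot> E \<ominus> aconst (1 / Phi 2 Q)"

definition A_tilde_bi :: alg where
  "A_tilde_bi =
     ((aEn \<ominus> aconst (s_var ^ 2 * Qn_var ^ 2)) \<odot> (aconst (Qm_var ^ 2) \<odot> aEm \<ominus> aconst 1)
      \<ominus> (aEm \<ominus> aconst (s_var ^ 2 * Qm_var ^ 2)) \<odot> (aconst (Qn_var ^ 2) \<odot> aEn \<ominus> aconst 1))
     \<odot> aconst (Qm_var * Qn_var)"

definition A_bi2 :: alg where
  "A_bi2 =
     (u1 aEn Qn_var \<odot> (aEn \<ominus> aconst (s_var ^ 2 * Qn_var ^ 2)) \<odot> v1 aEm Qm_var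
        \<odot> (aconst (Qm_var ^ 2) \<odot> aEm \<ominus> aconst 1)
      \<ominus> u1 aEm Qm_var \<odot> (aEm \<ominus> aconst (s_var ^ 2 * Qm_var ^ 2)) \<odot> v1 aEn Qn_var
        \<odot> (aconst (Qn_var ^ 2) \<odot> aEn \<ominus> aconst 1))
     \<odot> aconst (Qm_var * Qn_var)"

end

theory Submission
  imports Defs
begin

text \<open>Write a = E - s^2 Q^2 and b = Q^2 E - 1 in either variable. In each variable u_1 intertwines
  these factors, u_1 b = v_1 a: comparing coefficients of E this is
  (1 - s^6 Q^4) / Phi_6(Q) = 1 = (1 - s^2 Q^4) / Phi_2(Q). Operators in E_m with coefficients free of
  Q_n commute with operators in E_n with coefficients free of Q_m. Hence for C = u_n v_m + u_m v_n the
  product C (a_n b_m - a_m b_n) is u_n a_n v_m b_m - u_m a_m v_n b_n plus the cross terms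
  u_m v_n a_n b_m - u_n v_m a_m b_n, which cancel:
  u_n v_m a_m b_n = (u_n b_n)(v_m a_m) = (v_n a_n)(u_m b_m) = u_m v_n a_n b_m.\<close>

section \<open>Substitution of variables in the coefficient field\<close>

lemma mono_shift_add: "mono_shift k (a + b) = mono_shift k a + mono_shift k b"
  unfolding mono_shift_def by (simp add: lookup_add single_add algebra_simps)

lemma inj_mono_shift:
  assumes "k \<noteq> 0"
  shows "inj (mono_shift k)"
proof (rule injI)
  fix a b assume eq: "mono_shift k a = mono_shift k b"
  have "Poly_Mapping.lookup (mono_shift k c) k = Poly_Mapping.lookup c k" for c
    using assms by (simp add: mono_shift_def lookup_add lookup_single)
  with eq have "Poly_Mapping.lookup a k = Poly_Mapping.lookup b k"
    by metis
  with eq show "a = b"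
    unfolding mono_shift_def by simp
qed

lemma mono_shift_commute:
  assumes "k \<noteq> 0" "l \<noteq> 0"
  shows "mono_shift k (mono_shift l a) = mono_shift l (mono_shift k a)"
  using assms by (simp add: mono_shift_def lookup_add lookup_single add_ac)

lemma poly_mapping_sum_single:
  "p = (\<Sum>a\<in>Poly_Mapping.keys p. Poly_Mapping.single a (Poly_Mapping.lookup p a))"
  by (rule poly_mapping_eqI)
     (simp add: Poly_Mapping.lookup_sum lookup_single when_def in_keys_iff)

lemma msub_eq_sum:
  assumes "finite A" "Poly_Mapping.keys p \<subseteq> A"
  shows "msub k p = (\<Sum>a\<in>A. Poly_Mapping.single (mono_shift k a) (Poly_Mapping.lookup p a))"
  unfolding msub_def
  by (rule sum.mono_neutral_left[OF assms]) (simp add: in_keys_iff)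

lemma msub_single: "msub k (Poly_Mapping.single a c) = Poly_Mapping.single (mono_shift k a) c"
  by (subst msub_eq_sum[of "{a}"]) auto

lemma msub_add: "msub k (p + q) = msub k p + msub k q"
proof -
  let ?A = "Poly_Mapping.keys p \<union> Poly_Mapping.keys q"
  have "Poly_Mapping.keys (p + q) \<subseteq> ?A"
    by (rule keys_add)
  then show ?thesis
    by (simp add: msub_eq_sum[of ?A] lookup_add single_add sum.distrib)
qed

lemma msub_zero: "msub k 0 = 0"
  by (simp add: msub_def)

lemma msub_sum: "msub k (\<Sum>x\<in>A. f x) = (\<Sum>x\<in>A. msub k (f x))"
  by (induction A rule: infinite_finite_induct) (simp_all add: msub_zero msub_add)

lemma msub_mult: "msub k (p * q) = msub k p * msub k q"
proof -
  have "p * q = (\<Sum>a\<in>Poly_Mapping.keys p. \<Sum>b\<in>Poly_Mapping.keys q.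
      Poly_Mapping.single (a + b) (Poly_Mapping.lookup p a * Poly_Mapping.lookup q b))"
    by (subst (1 2) poly_mapping_sum_single) (simp add: sum_product mult_single)
  then have "msub k (p * q) = (\<Sum>a\<in>Poly_Mapping.keys p. \<Sum>b\<in>Poly_Mapping.keys q.
      Poly_Mapping.single (mono_shift k a + mono_shift k b) (Poly_Mapping.lookup p a * Poly_Mapping.lookup q b))"
    by (simp add: msub_sum msub_single mono_shift_add)
  also have "\<dots> = msub k p * msub k q"
    by (simp add: msub_def sum_product mult_single)
  finally show ?thesis .
qed

lemma msub_one: "msub k 1 = 1"
  using msub_single[of k 0 1] by (simp add: mono_shift_def)

lemma lookup_msub_mono_shift:
  assumes "k \<noteq> 0"
  shows "Poly_Mapping.lookup (msub k p) (mono_shift k a) = Poly_Mapping.lookup p a"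
  using inj_mono_shift[OF assms]
  by (simp add: msub_def Poly_Mapping.lookup_sum lookup_single inj_eq when_def in_keys_iff)

lemma msub_eq_0_iff:
  assumes "k \<noteq> 0"
  shows "msub k p = 0 \<longleftrightarrow> p = 0"
  by (metis assms lookup_msub_mono_shift lookup_zero msub_zero poly_mapping_eqI)

lemma msub_commute:
  assumes "k \<noteq> 0" "l \<noteq> 0"
  shows "msub k (msub l p) = msub l (msub k p)"
  unfolding msub_def[of _ p] by (simp add: msub_sum msub_single mono_shift_commute[OF assms])

locale ring_endo =
  fixes \<sigma> :: "'a::field \<Rightarrow> 'a"
  assumes hom_add: "\<sigma> (x + y) = \<sigma> x + \<sigma> y"
    and hom_mult: "\<sigma> (x * y) = \<sigma> x * \<sigma> y"
    and hom_one: "\<sigma> 1 = 1"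
begin

lemma hom_zero: "\<sigma> 0 = 0"
  using hom_add[of 0 0] by (metis add.right_neutral add_left_cancel)

lemma hom_uminus: "\<sigma> (- x) = - \<sigma> x"
  using hom_add[of x "- x"] by (simp add: hom_zero eq_neg_iff_add_eq_0 add.commute)

lemma hom_diff: "\<sigma> (x - y) = \<sigma> x - \<sigma> y"
  using hom_add[of x "- y"] by (simp add: hom_uminus)

lemma hom_sum: "\<sigma> (\<Sum>i\<in>A. f i) = (\<Sum>i\<in>A. \<sigma> (f i))"
  using sum_comp_morphism[of \<sigma> f A] by (simp add: hom_zero hom_add comp_def)

lemma hom_power: "\<sigma> (x ^ n) = \<sigma> x ^ n"
  by (induction n) (simp_all add: hom_one hom_mult)

lemma hom_inverse: "\<sigma> (inverse x) = inverse (\<sigma> x)"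
proof (cases "x = 0")
  case False
  then have "\<sigma> x * \<sigma> (inverse x) = 1"
    by (metis hom_mult hom_one right_inverse)
  then show ?thesis
    by (rule inverse_unique[symmetric])
qed (simp add: hom_zero)

lemma hom_divide: "\<sigma> (x / y) = \<sigma> x / \<sigma> y"
  by (simp add: divide_inverse hom_mult hom_inverse)

lemma ring_endo_funpow: "ring_endo (\<sigma> ^^ n)"
  by (induction n) (simp_all add: ring_endo_def hom_add hom_mult hom_one)

end

lemma ring_endo_comp: "ring_endo f \<Longrightarrow> ring_endo g \<Longrightarrow> ring_endo (f \<circ> g)"
  by (simp add: ring_endo_def)

lemma rsub_Fract:
  assumes "k \<noteq> 0" "q \<noteq> 0"
  shows "rsub k (Fract p q) = Fract (msub k p) (msub k q)"
  unfolding rsub_def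
proof (rule the_equality)
  show "\<forall>p' q'. q' \<noteq> 0 \<longrightarrow> Fract p q = Fract p' q' \<longrightarrow>
      Fract (msub k p) (msub k q) = Fract (msub k p') (msub k q')"
  proof (intro allI impI)
    fix p' q' assume "q' \<noteq> 0" and "Fract p q = Fract p' q'"
    then have "msub k p * msub k q' = msub k p' * msub k q"
      using assms(2) by (simp add: eq_fract flip: msub_mult)
    then show "Fract (msub k p) (msub k q) = Fract (msub k p') (msub k q')"
      using assms \<open>q' \<noteq> 0\<close> by (simp add: eq_fract msub_eq_0_iff)
  qed
qed (use assms(2) in blast)

lemma ring_endo_rsub:
  assumes "k \<noteq> 0"
  shows "ring_endo (rsub k)"
proof
  fix x y :: rfun
  show "rsub k (x + y) = rsub k x + rsub k y"
    by (cases x; cases y) (simp add: assms rsub_Fract msub_add msub_mult msub_eq_0_iff)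
  show "rsub k (x * y) = rsub k x * rsub k y"
    by (cases x; cases y) (simp add: assms rsub_Fract msub_mult msub_eq_0_iff)
  show "rsub k 1 = 1"
    by (simp add: assms One_fract_def rsub_Fract msub_one)
qed

lemmas rsub_zero = ring_endo.hom_zero[OF ring_endo_rsub]
  and rsub_one = ring_endo.hom_one[OF ring_endo_rsub]
  and rsub_diff = ring_endo.hom_diff[OF ring_endo_rsub]
  and rsub_mult = ring_endo.hom_mult[OF ring_endo_rsub]
  and rsub_divide = ring_endo.hom_divide[OF ring_endo_rsub]
  and rsub_power = ring_endo.hom_power[OF ring_endo_rsub]

lemma rsub_commute:
  assumes "k \<noteq> 0" "l \<noteq> 0"
  shows "rsub k (rsub l x) = rsub l (rsub k x)"
  by (cases x) (simp add: assms rsub_Fract msub_eq_0_iff msub_commute)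

lemma rsub_rvar:
  assumes "k \<noteq> 0"
  shows "rsub k (rvar i) = (if i = k then s_var * rvar i else rvar i)"
  using assms
  by (simp add: rvar_def mvar_def rsub_Fract msub_single msub_one mono_shift_def
      lookup_single mult_single add.commute)

lemma rvar_power: "rvar i ^ n = Fract (Poly_Mapping.single (Poly_Mapping.single i n) 1) 1"
proof (induction n)
  case (Suc n)
  then show ?case
    by (simp add: rvar_def mvar_def mult_single flip: single_add)
qed (simp add: One_fract_def)

lemma Phi_rvar_nonzero: "Phi k (rvar i) \<noteq> 0"
proof
  let ?m = "Poly_Mapping.single 0 k + Poly_Mapping.single i 4 :: nat \<Rightarrow>\<^sub>0 nat"
  assume "Phi k (rvar i) = 0"
  then have "Fract (1 - Poly_Mapping.single ?m (1::rat)) 1 = 0"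
    by (simp add: Phi_def rvar_power One_fract_def mult_single)
  then have "Poly_Mapping.single ?m (1::rat) = 1"
    by (simp add: Zero_fract_def eq_fract)
  then have "Poly_Mapping.lookup (1 :: mpoly) ?m = 1"
    by (metis lookup_single_eq)
  then have "?m = 0"
    by (simp add: lookup_one when_def split: if_splits)
  moreover have "Poly_Mapping.lookup ?m i \<ge> 4"
    by (simp add: lookup_add lookup_single)
  ultimately show False
    by simp
qed

section \<open>The skew multiplication\<close>

lemma funpow_comp_commute:
  assumes "f \<circ> g = g \<circ> f"
  shows "f \<circ> g ^^ n = g ^^ n \<circ> f"
proof (induction n)
  case (Suc n)
  have "f \<circ> g ^^ Suc n = (f \<circ> g) \<circ> g ^^ n"
    by (simp add: comp_assoc)
  also have "\<dots> = g \<circ> (f \<circ> g ^^ n)"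
    by (simp add: assms comp_assoc)
  also have "\<dots> = g ^^ Suc n \<circ> f"
    by (simp only: Suc.IH funpow.simps(2) comp_assoc)
  finally show ?case .
qed simp

lemma funpow_commute:
  assumes "f \<circ> g = g \<circ> f"
  shows "f ^^ m \<circ> g ^^ n = g ^^ n \<circ> f ^^ m"
  by (metis assms funpow_comp_commute)

lemma funpow_fixpoint: "f x = x \<Longrightarrow> (f ^^ n) x = x"
  by (induction n) auto

text \<open>In the algebra, E_m^a E_n^b c = (twist a b c) E_m^a E_n^b.\<close>

definition twist :: "nat \<Rightarrow> nat \<Rightarrow> rfun \<Rightarrow> rfun" where
  "twist a b = (sigma_m ^^ a) \<circ> (sigma_n ^^ b)"

lemma ring_endo_twist: "ring_endo (twist a b)"
  unfolding twist_def
  by (intro ring_endo_comp ring_endo.ring_endo_funpow ring_endo_rsub) simp_all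

interpretation twist: ring_endo "twist a b" for a b
  by (rule ring_endo_twist)

lemma twist_Em: "twist a 0 x = (sigma_m ^^ a) x"
  by (simp add: twist_def)

lemma twist_En: "twist 0 b x = (sigma_n ^^ b) x"
  by (simp add: twist_def)

lemma twist_twist: "twist a b (twist c d x) = twist (a + c) (b + d) x"
proof -
  have "sigma_n ^^ b \<circ> sigma_m ^^ c = sigma_m ^^ c \<circ> sigma_n ^^ b"
    by (rule funpow_commute) (simp add: fun_eq_iff rsub_commute)
  then have "twist a b \<circ> twist c d = twist (a + c) (b + d)"
    by (simp add: twist_def funpow_add comp_assoc) (simp flip: comp_assoc)
  then show ?thesis
    by (metis comp_apply)
qed

lemma amul_apply: "(f \<odot> g) i j = (\<Sum>a\<le>i. \<Sum>b\<le>j. f a b * twist a b (g (i - a) (j - b)))"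
  by (simp add: amul_def twist_def)

lemma adiff_amul: "(f \<ominus> g) \<odot> h = f \<odot> h \<ominus> g \<odot> h"
  by (simp add: amul_def adiff_def algebra_simps sum_subtractf)

lemma aadd_amul: "(f \<oplus> g) \<odot> h = f \<odot> h \<oplus> g \<odot> h"
  by (simp add: amul_def aadd_def algebra_simps sum.distrib)

lemma amul_adiff: "f \<odot> (g \<ominus> h) = f \<odot> g \<ominus> f \<odot> h"
  by (simp add: fun_eq_iff amul_apply adiff_def twist.hom_diff algebra_simps sum_subtractf)

lemma sum_atMost_triangle:
  fixes n :: nat and F :: "nat \<Rightarrow> nat \<Rightarrow> 'a::comm_monoid_add"
  shows "(\<Sum>a\<le>n. \<Sum>c\<le>a. F c a) = (\<Sum>c\<le>n. \<Sum>a\<le>n - c. F c (c + a))"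
proof -
  have "{(c, a). c + a \<le> n} = Sigma {..n} (\<lambda>c. {..n - c})"
    by auto
  then have "(\<Sum>c\<le>n. \<Sum>a\<le>n - c. F c (c + a)) = (\<Sum>(c, a)\<in>{(c, a). c + a \<le> n}. F c (c + a))"
    by (simp add: sum.Sigma)
  also have "\<dots> = (\<Sum>a\<le>n. \<Sum>c\<le>a. F c (c + (a - c)))"
    by (rule sum.triangle_reindex_eq)
  also have "\<dots> = (\<Sum>a\<le>n. \<Sum>c\<le>a. F c a)"
    by (intro sum.cong) auto
  finally show ?thesis ..
qed

lemma sum_atMost_triangle2:
  fixes i j :: nat and F :: "nat \<Rightarrow> nat \<Rightarrow> nat \<Rightarrow> nat \<Rightarrow> 'a::comm_monoid_add"
  shows "(\<Sum>a\<le>i. \<Sum>b\<le>j. \<Sum>c\<le>a. \<Sum>d\<le>b. F a b c d)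
     = (\<Sum>c\<le>i. \<Sum>d\<le>j. \<Sum>a\<le>i - c. \<Sum>b\<le>j - d. F (c + a) (d + b) c d)"
proof -
  have "(\<Sum>a\<le>i. \<Sum>b\<le>j. \<Sum>c\<le>a. \<Sum>d\<le>b. F a b c d) = (\<Sum>a\<le>i. \<Sum>c\<le>a. \<Sum>b\<le>j. \<Sum>d\<le>b. F a b c d)"
    by (intro sum.cong refl sum.swap)
  also have "\<dots> = (\<Sum>c\<le>i. \<Sum>a\<le>i - c. \<Sum>d\<le>j. \<Sum>b\<le>j - d. F (c + a) (d + b) c d)"
    by (simp only: sum_atMost_triangle)
  also have "\<dots> = (\<Sum>c\<le>i. \<Sum>d\<le>j. \<Sum>a\<le>i - c. \<Sum>b\<le>j - d. F (c + a) (d + b) c d)"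
    by (intro sum.cong refl sum.swap)
  finally show ?thesis .
qed

lemma amul_assoc: "(f \<odot> g) \<odot> h = f \<odot> (g \<odot> h)"
proof (intro ext)
  fix i j
  have "((f \<odot> g) \<odot> h) i j = (\<Sum>a\<le>i. \<Sum>b\<le>j. \<Sum>c\<le>a. \<Sum>d\<le>b.
      f c d * twist c d (g (a - c) (b - d)) * twist a b (h (i - a) (j - b)))"
    by (simp add: amul_apply sum_distrib_right)
  also have "\<dots> = (\<Sum>c\<le>i. \<Sum>d\<le>j. \<Sum>a\<le>i - c. \<Sum>b\<le>j - d.
      f c d * twist c d (g a b) * twist (c + a) (d + b) (h (i - c - a) (j - d - b)))"
    by (simp add: sum_atMost_triangle2)
  also have "\<dots> = (f \<odot> (g \<odot> h)) i j"
    by (simp add: amul_apply twist.hom_sum twist.hom_mult twist_twist sum_distrib_left mult.assoc)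
  finally show "((f \<odot> g) \<odot> h) i j = (f \<odot> (g \<odot> h)) i j" .
qed

definition amono :: "nat \<Rightarrow> nat \<Rightarrow> rfun \<Rightarrow> alg" where
  "amono a b c = (\<lambda>i j. if i = a \<and> j = b then c else 0)"

lemma aconst_eq_amono: "aconst c = amono 0 0 c"
  by (simp add: aconst_def amono_def)

lemma aEm_eq_amono: "aEm = amono 1 0 1"
  by (simp add: aEm_def amono_def)

lemma aEn_eq_amono: "aEn = amono 0 1 1"
  by (simp add: aEn_def amono_def)

lemma sum_atMost_delta2:
  fixes i j :: nat
  shows "(\<Sum>x\<le>i. \<Sum>y\<le>j. if x = a \<and> y = b then K else 0) = (if a \<le> i \<and> b \<le> j then K else 0)"
proof -
  have "(\<Sum>x\<le>i. \<Sum>y\<le>j. if x = a \<and> y = b then K else 0)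
      = (\<Sum>x\<le>i. if x = a then \<Sum>y\<le>j. if y = b then K else 0 else 0)"
    by (intro sum.cong) auto
  then show ?thesis
    by (simp add: sum.delta)
qed

lemma amono_amul: "amono a b c \<odot> amono a' b' d = amono (a + a') (b + b') (c * twist a b d)"
proof (intro ext)
  fix i j
  have "(amono a b c \<odot> amono a' b' d) i j
      = (\<Sum>x\<le>i. \<Sum>y\<le>j. if x = a \<and> y = b then c * twist a b (amono a' b' d (i - a) (j - b)) else 0)"
    unfolding amul_apply by (intro sum.cong refl) (simp add: amono_def)
  also have "\<dots> = amono (a + a') (b + b') (c * twist a b d) i j"
    by (auto simp: sum_atMost_delta2 amono_def twist.hom_zero)
  finally show "(amono a b c \<odot> amono a' b' d) i j = amono (a + a') (b + b') (c * twist a b d) i j" .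
qed

lemma alg_fin_amono: "alg_fin (amono a b c)"
  unfolding alg_fin_def amono_def by (rule finite_subset[of _ "{(a, b)}"]) auto

lemma alg_fin_aadd: "alg_fin f \<Longrightarrow> alg_fin g \<Longrightarrow> alg_fin (f \<oplus> g)"
  unfolding alg_fin_def aadd_def
  by (rule finite_subset[of _ "{(i, j). f i j \<noteq> 0} \<union> {(i, j). g i j \<noteq> 0}"]) auto

lemma alg_fin_adiff: "alg_fin f \<Longrightarrow> alg_fin g \<Longrightarrow> alg_fin (f \<ominus> g)"
  unfolding alg_fin_def adiff_def
  by (rule finite_subset[of _ "{(i, j). f i j \<noteq> 0} \<union> {(i, j). g i j \<noteq> 0}"]) auto

lemma alg_fin_amul:
  assumes "alg_fin f" "alg_fin g"
  shows "alg_fin (f \<odot> g)"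
proof -
  let ?supp = "\<lambda>h :: alg. {(i, j). h i j \<noteq> 0}"
  have "?supp (f \<odot> g) \<subseteq> (\<lambda>((a, b), (c, d)). (a + c, b + d)) ` (?supp f \<times> ?supp g)"
  proof clarify
    fix i j assume "(f \<odot> g) i j \<noteq> 0"
    then obtain a b where "a \<le> i" "b \<le> j" "f a b * twist a b (g (i - a) (j - b)) \<noteq> 0"
      unfolding amul_apply by (metis (no_types, lifting) atMost_iff sum.not_neutral_contains_not_neutral)
    then have "f a b \<noteq> 0" "g (i - a) (j - b) \<noteq> 0" and "(i, j) = (a + (i - a), b + (j - b))"
      by (auto simp: twist.hom_zero)
    then show "(i, j) \<in> (\<lambda>((a, b), (c, d)). (a + c, b + d)) ` (?supp f \<times> ?supp g)"
      by force
  qed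
  moreover have "finite (?supp f \<times> ?supp g)"
    using assms by (simp add: alg_fin_def)
  ultimately show ?thesis
    unfolding alg_fin_def by (meson finite_imageI finite_subset)
qed

section \<open>The intertwining relation and commuting variables\<close>

lemma u1_intertwines:
  assumes twist_Q: "twist p q Q = s_var * Q" and twist_s: "twist p q s_var = s_var"
    and nonzero: "Phi 2 Q \<noteq> 0" "Phi 6 Q \<noteq> 0"
  shows "u1 (amono p q 1) Q \<odot> (aconst (Q ^ 2) \<odot> amono p q 1 \<ominus> aconst 1)
       = v1 (amono p q 1) Q \<odot> (amono p q 1 \<ominus> aconst (s_var ^ 2 * Q ^ 2))"
proof -
  have coeff_E: "1 / Phi 6 Q + s_var ^ 2 * Q ^ 4 / Phi 2 Q = s_var ^ 6 * Q ^ 4 / Phi 6 Q + 1 / Phi 2 Q"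
    using nonzero by (simp add: field_simps) (simp add: Phi_def algebra_simps)
  show ?thesis
    unfolding u1_def v1_def aconst_eq_amono
    using coeff_E
    by (simp add: adiff_amul amul_adiff amono_amul twist_Em twist.hom_mult twist.hom_power
        twist.hom_one twist_Q twist_s)
      (auto simp: fun_eq_iff adiff_def amono_def power_mult_distrib field_simps)
qed

definition Em_poly :: "alg \<Rightarrow> bool" where
  "Em_poly f \<longleftrightarrow> (\<forall>i j. j \<noteq> 0 \<longrightarrow> f i j = 0) \<and> (\<forall>i. sigma_n (f i 0) = f i 0)"

definition En_poly :: "alg \<Rightarrow> bool" where
  "En_poly f \<longleftrightarrow> (\<forall>i j. i \<noteq> 0 \<longrightarrow> f i j = 0) \<and> (\<forall>j. sigma_m (f 0 j) = f 0 j)"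

lemma Em_poly_amono: "sigma_n c = c \<Longrightarrow> Em_poly (amono i 0 c)"
  by (simp add: Em_poly_def amono_def rsub_zero)

lemma En_poly_amono: "sigma_m c = c \<Longrightarrow> En_poly (amono 0 j c)"
  by (simp add: En_poly_def amono_def rsub_zero)

lemma Em_poly_adiff: "Em_poly f \<Longrightarrow> Em_poly g \<Longrightarrow> Em_poly (f \<ominus> g)"
  by (simp add: Em_poly_def adiff_def rsub_diff)

lemma En_poly_adiff: "En_poly f \<Longrightarrow> En_poly g \<Longrightarrow> En_poly (f \<ominus> g)"
  by (simp add: En_poly_def adiff_def rsub_diff)

lemma amul_Em_En_apply:
  assumes "Em_poly f" "En_poly g"
  shows "(f \<odot> g) i j = f i 0 * g 0 j"
proof -
  have "(f \<odot> g) i j = (\<Sum>x\<le>i. \<Sum>y\<le>j. if x = i \<and> y = 0 then f i 0 * g 0 j else 0)"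
    unfolding amul_apply
    using assms by (intro sum.cong refl)
      (auto simp: Em_poly_def En_poly_def twist_Em twist_En funpow_fixpoint twist.hom_zero)
  then show ?thesis
    by (simp add: sum_atMost_delta2)
qed

lemma amul_En_Em_apply:
  assumes "En_poly g" "Em_poly f"
  shows "(g \<odot> f) i j = g 0 j * f i 0"
proof -
  have "(g \<odot> f) i j = (\<Sum>x\<le>i. \<Sum>y\<le>j. if x = 0 \<and> y = j then g 0 j * f i 0 else 0)"
    unfolding amul_apply
    using assms by (intro sum.cong refl)
      (auto simp: Em_poly_def En_poly_def twist_Em twist_En funpow_fixpoint twist.hom_zero)
  then show ?thesis
    by (simp add: sum_atMost_delta2)
qed

lemma Em_En_commute: "Em_poly f \<Longrightarrow> En_poly g \<Longrightarrow> f \<odot> g = g \<odot> f"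
  by (simp add: fun_eq_iff amul_Em_En_apply amul_En_Em_apply mult.commute)

lemma Em_En_left_commute: "Em_poly f \<Longrightarrow> En_poly g \<Longrightarrow> f \<odot> (g \<odot> h) = g \<odot> (f \<odot> h)"
  by (metis Em_En_commute amul_assoc)

lemma intertwined_cross_terms_cancel:
  assumes Em: "Em_poly u_m" "Em_poly v_m" "Em_poly a_m" "Em_poly b_m"
    and En: "En_poly u_n" "En_poly v_n" "En_poly a_n" "En_poly b_n"
    and intertwine_m: "u_m \<odot> b_m = v_m \<odot> a_m" and intertwine_n: "u_n \<odot> b_n = v_n \<odot> a_n"
  shows "(u_n \<odot> v_m \<oplus> u_m \<odot> v_n) \<odot> (a_n \<odot> b_m \<ominus> a_m \<odot> b_n)
       = u_n \<odot> a_n \<odot> v_m \<odot> b_m \<ominus> u_m \<odot> a_m \<odot> v_n \<odot> b_n"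
proof -
  have cross: "u_n \<odot> v_m \<odot> (a_m \<odot> b_n) = u_m \<odot> v_n \<odot> (a_n \<odot> b_m)"
  proof -
    have "u_n \<odot> v_m \<odot> (a_m \<odot> b_n) = (u_n \<odot> b_n) \<odot> (v_m \<odot> a_m)"
      using Em_En_commute[OF Em(3) En(4)] Em_En_left_commute[OF Em(2) En(4)]
      by (simp add: amul_assoc)
    also have "\<dots> = (v_n \<odot> a_n) \<odot> (u_m \<odot> b_m)"
      by (simp add: intertwine_m intertwine_n)
    also have "\<dots> = u_m \<odot> v_n \<odot> (a_n \<odot> b_m)"
      using Em_En_left_commute[OF Em(1) En(2)] Em_En_left_commute[OF Em(1) En(3)]
      by (simp add: amul_assoc)
    finally show ?thesis .
  qed
  have "u_n \<odot> v_m \<odot> (a_n \<odot> b_m) = u_n \<odot> a_n \<odot> v_m \<odot> b_m"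
    using Em_En_left_commute[OF Em(2) En(3)] by (simp add: amul_assoc)
  moreover have "u_m \<odot> v_n \<odot> (a_m \<odot> b_n) = u_m \<odot> a_m \<odot> v_n \<odot> b_n"
    using Em_En_left_commute[OF Em(3) En(2)] by (simp add: amul_assoc)
  ultimately show ?thesis
    unfolding aadd_amul amul_adiff cross by (simp add: fun_eq_iff aadd_def adiff_def)
qed

lemma Em_poly_Qm_factors:
  "Em_poly (u1 aEm Qm_var)" "Em_poly (v1 aEm Qm_var)"
  "Em_poly (aEm \<ominus> aconst (s_var ^ 2 * Qm_var ^ 2))" "Em_poly (aconst (Qm_var ^ 2) \<odot> aEm \<ominus> aconst 1)"
  by (simp_all add: u1_def v1_def aconst_eq_amono aEm_eq_amono amono_amul twist_Em Em_poly_adiff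
      Em_poly_amono Phi_def rsub_divide rsub_diff rsub_mult rsub_power rsub_one rsub_rvar)

lemma En_poly_Qn_factors:
  "En_poly (u1 aEn Qn_var)" "En_poly (v1 aEn Qn_var)"
  "En_poly (aEn \<ominus> aconst (s_var ^ 2 * Qn_var ^ 2))" "En_poly (aconst (Qn_var ^ 2) \<odot> aEn \<ominus> aconst 1)"
  by (simp_all add: u1_def v1_def aconst_eq_amono aEn_eq_amono amono_amul twist_En En_poly_adiff
      En_poly_amono Phi_def rsub_divide rsub_diff rsub_mult rsub_power rsub_one rsub_rvar)

lemma u1_intertwines_Qm:
  "u1 aEm Qm_var \<odot> (aconst (Qm_var ^ 2) \<odot> aEm \<ominus> aconst 1)
     = v1 aEm Qm_var \<odot> (aEm \<ominus> aconst (s_var ^ 2 * Qm_var ^ 2))"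
  unfolding aEm_eq_amono
  by (rule u1_intertwines) (simp_all add: twist_Em rsub_rvar Phi_rvar_nonzero)

lemma u1_intertwines_Qn:
  "u1 aEn Qn_var \<odot> (aconst (Qn_var ^ 2) \<odot> aEn \<ominus> aconst 1)
     = v1 aEn Qn_var \<odot> (aEn \<ominus> aconst (s_var ^ 2 * Qn_var ^ 2))"
  unfolding aEn_eq_amono
  by (rule u1_intertwines) (simp_all add: twist_En rsub_rvar Phi_rvar_nonzero)

theorem lemma4p4:
  shows "\<exists>C. alg_fin C \<and> A_bi2 = C \<odot> A_tilde_bi"
proof (intro exI conjI)
  let ?C = "u1 aEn Qn_var \<odot> v1 aEm Qm_var \<oplus> u1 aEm Qm_var \<odot> v1 aEn Qn_var"
  show "alg_fin ?C"
    by (simp add: u1_def v1_def aconst_eq_amono aEm_eq_amono aEn_eq_amono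
        alg_fin_amono alg_fin_aadd alg_fin_adiff alg_fin_amul)
  have "?C \<odot> A_tilde_bi
      = (?C \<odot> ((aEn \<ominus> aconst (s_var ^ 2 * Qn_var ^ 2)) \<odot> (aconst (Qm_var ^ 2) \<odot> aEm \<ominus> aconst 1)
          \<ominus> (aEm \<ominus> aconst (s_var ^ 2 * Qm_var ^ 2)) \<odot> (aconst (Qn_var ^ 2) \<odot> aEn \<ominus> aconst 1)))
        \<odot> aconst (Qm_var * Qn_var)"
    by (simp add: A_tilde_bi_def amul_assoc)
  also have "\<dots> = A_bi2"
    by (simp only: A_bi2_def intertwined_cross_terms_cancel[OF Em_poly_Qm_factors En_poly_Qn_factors
          u1_intertwines_Qm u1_intertwines_Qn])
  finally show "A_bi2 = ?C \<odot> A_tilde_bi" ..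
qed

end
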